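(* Fix a task index $t\in\{1,2,\dots\}$ with input dimension $M_t$, output dimension $C_t$, compact domain $D_t\subset\mathbb{R}^{M_t}$, and target function $f=[f_1,\dots,f_{C_t}]\in L_2(D_t)$. Suppose that $\mathrm{span}(\Gamma)$ is dense in $L_2$ space and that, for all $g\in\Gamma$, $G$ is a collection of some $g$ with nonlinear activation. Let $0<r(t)<1$ and let $\{\mu_L(t)\}_{L\ge 1}$ be a non-negative real sequence with $\lim_{L\to+\infty}\mu_L(t)=0$ and $\mu_L(t)\le 1-r(t)$ for all $L$. Let $l\in\mathbb{N}^+$ be a step size. Nodes $g_1,g_2,\dots\in\Gamma$ are added to the network in batches of $l$; for $L=1,2,\dots$ (with $L$ running over the batch endpoints) set $$\delta_L^\star(t)=\sum_{c=1}^{C_t}\delta_{L,c}^\star(t),\qquad \delta_{L,c}^\star(t)=(1-r(t)-\mu_L(t))\,\|e_{L-l,c}^\star(t)\|^2 .$$ Suppose that each new batch of nodes $G_l=[g_{L-l+1},\dots,g_L]$ (with $g_j(x)=g(xw_j+b_j)$, i.e. $G_l=G_l(X_tW_l+B_l)$ with randomly generated weights $W_l$ and biases $B_l$) is chosen so that $$\langle e_{L-l,c}^\star(t),\,G_l\beta_{l,c}(t)\rangle\ \ge\ \delta_{L,c}^\star(t),\qquad c=1,2,\dots,C_t,$$ and is connected to the existing network through output weights determined in the least-squares sense $$[\beta_1^\star(t),\dots,\beta_L^\star(t)]=\arg\min_{\beta(t)}\Big\|f-\sum_{j=1}^{L}\beta_j(t)g_j\Big\|.$$ Then $\lim_{L\to+\infty}\|f-f_L^\star\|=0$,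 where $f_L^\star=f_{L-l}^\star+\beta_l^\star(t)G_l=\sum_{j=1}^L\beta_j^\star(t)g_j$.
   Context: $\Gamma=\{g_1,g_2,\dots\}$ is a set of bounded nonconstant piecewise continuous functions and $\mathrm{span}(\Gamma)$ is the function space spanned by $\Gamma$. $L_2(D_t)$ is the space of Lebesgue measurable $f=[f_1,\dots,f_{C_t}]:\mathbb{R}^{M_t}\to\mathbb{R}^{C_t}$ on $D_t$ with norm $\|f\|=\big(\sum_{c=1}^{C_t}\int_{D_t}|f_c(x)|^2dx\big)^{1/2}<\infty$, and inner product $\langle f,\vartheta\rangle=\sum_{c=1}^{C_t}\langle f_c,\vartheta_c\rangle=\sum_{c=1}^{C_t}\int_{D_t}f_c(x)\vartheta_c(x)\,dx$; for scalar-valued functions the inner product is $\int_{D_t}f_c\vartheta_c\,dx$. Each output weight $\beta_j(t)\in\mathbb{R}^{1\times C_t}$ is a row vector, so $\beta_j(t)g_j$ is $\mathbb{R}^{C_t}$-valued. The optimal residual after $L$ nodes is $e_L^\star(t)=f-\sum_{j=1}^L\beta_j^\star(t)g_j$ with $e_0^\star(t)=f$, and $e_{L,c}^\star(t)$ denotes its $c$-th component. For the batch $G_l=[g_{L-l+1},\dots,g_L]$ and a coefficient vector $\beta=(\beta_{L-l+1},\dots,\beta_L)^{\mathrm T}\in\mathbb{R}^l$, $G_l\beta=\sum_{j=L-l+1}^{L}\beta_jg_j$. The intermediate output weights are $\beta_{l,c}(t)=(G_l^{\mathrm T}G_l)^\dagger G_l^{\mathrm T}e_{L-l,c}^\star(t)$,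 i.e. the least-squares coefficients of $e_{L-l,c}^\star(t)$ on $g_{L-l+1},\dots,g_L$, where $G_l^{\mathrm T}G_l$ is the Gram matrix $(\langle g_i,g_j\rangle)_{i,j}$, $G_l^{\mathrm T}e$ is the vector $(\langle g_j,e\rangle)_j$, and $^\dagger$ denotes the Moore–Penrose pseudoinverse. *)

theory Defs
  imports "HOL-Analysis.Analysis"
begin

definition L2_on :: "('m::euclidean_space) set \<Rightarrow> ('m \<Rightarrow> real) \<Rightarrow> bool" where
  "L2_on D u \<longleftrightarrow> u \<in> borel_measurable (lebesgue_on D) \<and>
                   integrable (lebesgue_on D) (\<lambda>x. (u x)^2)"

definition l2_inner :: "('m::euclidean_space) set \<Rightarrow> ('m \<Rightarrow> real) \<Rightarrow> ('m \<Rightarrow> real) \<Rightarrow> real" where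
  "l2_inner D u v = integral\<^sup>L (lebesgue_on D) (\<lambda>x. u x * v x)"

definition l2_norm :: "('m::euclidean_space) set \<Rightarrow> ('m \<Rightarrow> real) \<Rightarrow> real" where
  "l2_norm D u = sqrt (l2_inner D u u)"

definition vl2_norm :: "('m::euclidean_space) set \<Rightarrow> ('m \<Rightarrow> real^'c) \<Rightarrow> real" where
  "vl2_norm D F = sqrt (\<Sum>c\<in>UNIV. (l2_norm D (\<lambda>x. F x $ c))^2)"

definition piecewise_continuous :: "('m::euclidean_space \<Rightarrow> real) \<Rightarrow> bool" where
  "piecewise_continuous g \<longleftrightarrow>
     (\<exists>U. open U \<and> (UNIV - U) \<in> null_sets lebesgue \<and> continuous_on U g)"

definition admissible_node :: "('m::euclidean_space \<Rightarrow> real) \<Rightarrow> bool" where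
  "admissible_node g \<longleftrightarrow> g \<in> borel_measurable lebesgue \<and> bounded (range g) \<and>
     (\<exists>x y. g x \<noteq> g y) \<and> piecewise_continuous g"

definition span_dense_L2 :: "('m::euclidean_space) set \<Rightarrow> ('m \<Rightarrow> real) set \<Rightarrow> bool" where
  "span_dense_L2 D \<Gamma> \<longleftrightarrow>
     (\<forall>u. L2_on D u \<longrightarrow> (\<forall>\<epsilon>>0. \<exists>n (h::nat \<Rightarrow> 'm \<Rightarrow> real) (a::nat \<Rightarrow> real).
        (\<forall>i<n. h i \<in> \<Gamma>) \<and> l2_norm D (\<lambda>x. u x - (\<Sum>i<n. a i * h i x)) < \<epsilon>))"

definition net_out :: "(nat \<Rightarrow> 'm \<Rightarrow> real) \<Rightarrow> (nat \<Rightarrow> real^'c) \<Rightarrow> nat \<Rightarrow> 'm \<Rightarrow> real^'c" where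
  "net_out g \<beta> L x = (\<Sum>j\<in>{1..L}. g j x *\<^sub>R \<beta> j)"

definition is_LS_weights ::
  "('m::euclidean_space) set \<Rightarrow> ('m \<Rightarrow> real^'c) \<Rightarrow> (nat \<Rightarrow> 'm \<Rightarrow> real) \<Rightarrow> nat \<Rightarrow> (nat \<Rightarrow> real^'c) \<Rightarrow> bool" where
  "is_LS_weights D f g L \<beta> \<longleftrightarrow>
     (\<forall>\<beta>'. vl2_norm D (\<lambda>x. f x - net_out g \<beta> L x) \<le> vl2_norm D (\<lambda>x. f x - net_out g \<beta>' L x))"

definition mat_mult :: "nat \<Rightarrow> (nat \<Rightarrow> nat \<Rightarrow> real) \<Rightarrow> (nat \<Rightarrow> nat \<Rightarrow> real) \<Rightarrow> nat \<Rightarrow> nat \<Rightarrow> real" where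
  "mat_mult n A B i j = (\<Sum>k<n. A i k * B k j)"

definition is_MP_inverse :: "nat \<Rightarrow> (nat \<Rightarrow> nat \<Rightarrow> real) \<Rightarrow> (nat \<Rightarrow> nat \<Rightarrow> real) \<Rightarrow> bool" where
  "is_MP_inverse n A X \<longleftrightarrow>
     (\<forall>i<n. \<forall>j<n.
        mat_mult n (mat_mult n A X) A i j = A i j \<and>
        mat_mult n (mat_mult n X A) X i j = X i j \<and>
        mat_mult n A X i j = mat_mult n A X j i \<and>
        mat_mult n X A i j = mat_mult n X A j i) \<and>
     (\<forall>i j. \<not> (i < n \<and> j < n) \<longrightarrow> X i j = 0)"

definition MP_pinv :: "nat \<Rightarrow> (nat \<Rightarrow> nat \<Rightarrow> real) \<Rightarrow> nat \<Rightarrow> nat \<Rightarrow> real" where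
  "MP_pinv n A = (THE X. is_MP_inverse n A X)"

text \<open>Index i < l refers to node g_{L-l+1+i}.\<close>
definition batch_gram :: "('m::euclidean_space) set \<Rightarrow> (nat \<Rightarrow> 'm \<Rightarrow> real) \<Rightarrow> nat \<Rightarrow> nat \<Rightarrow> nat \<Rightarrow> nat \<Rightarrow> real" where
  "batch_gram D g l L i j = l2_inner D (g (L - l + 1 + i)) (g (L - l + 1 + j))"

definition batch_beta ::
  "('m::euclidean_space) set \<Rightarrow> (nat \<Rightarrow> 'm \<Rightarrow> real) \<Rightarrow> nat \<Rightarrow> nat \<Rightarrow> ('m \<Rightarrow> real) \<Rightarrow> nat \<Rightarrow> real" where
  "batch_beta D g l L e i =
     (\<Sum>j<l. MP_pinv l (batch_gram D g l L) i j * l2_inner D (g (L - l + 1 + j)) e)"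

definition batch_out ::
  "('m::euclidean_space) set \<Rightarrow> (nat \<Rightarrow> 'm \<Rightarrow> real) \<Rightarrow> nat \<Rightarrow> nat \<Rightarrow> ('m \<Rightarrow> real) \<Rightarrow> 'm \<Rightarrow> real" where
  "batch_out D g l L e x = (\<Sum>i<l. batch_beta D g l L e i * g (L - l + 1 + i) x)"

end

theory Submission
  imports Defs "HOL-Library.Function_Algebras"
begin

text \<open>
  The least-squares weights after a batch do at least as well as keeping the previous weights
  and adding, for every output component \<open>c\<close>, the batch fit \<open>h = G\<^sub>l \<beta>\<^sub>l\<^sub>,\<^sub>c\<close> of the previous
  residual \<open>e\<close>. Since \<open>\<beta>\<^sub>l\<^sub>,\<^sub>c = (G\<^sub>l\<^sup>T G\<^sub>l)\<^sup>\<dagger> G\<^sub>l\<^sup>T e\<close>, \<open>h\<close> is the orthogonal projection of \<open>e\<close>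
  onto the span of the batch, so \<open>\<parallel>e - h\<parallel>\<^sup>2 = \<parallel>e\<parallel>\<^sup>2 - \<langle>e, h\<rangle> \<le> (r + \<mu>\<^sub>L) \<parallel>e\<parallel>\<^sup>2\<close> by the batch
  inequality. Hence the squared residual contracts by a factor that is eventually below
  \<open>(1 + r) / 2 < 1\<close>, and it tends to zero.

  The projection property needs the Penrose identities \<open>X A X = X\<close>, \<open>X\<^sup>T = X\<close> for the
  pseudoinverse \<open>X\<close> of the symmetric Gram matrix \<open>A\<close>, hence the existence of \<open>X\<close>. A linear
  dependence among the powers of \<open>A\<close> gives \<open>A\<^sup>m = A\<^sup>m\<^sup>+\<^sup>1 Y\<close> with \<open>Y\<close> a polynomial in \<open>A\<close>; as
  \<open>ker A\<^sup>m\<^sup>+\<^sup>1 = ker A\<close> for symmetric \<open>A\<close>, this yields \<open>A = A\<^sup>2 Y\<close>, and \<open>X = Y A Y\<close>.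
\<close>

section \<open>Square matrices\<close>

text \<open>
  An \<open>n \<times> n\<close> matrix is a function \<open>nat \<Rightarrow> nat \<Rightarrow> real\<close> vanishing outside \<open>{..<n} \<times> {..<n}\<close>
  (the convention of \<open>is_MP_inverse\<close>); \<open>mmult\<close> truncates \<open>mat_mult\<close> so that products stay
  in this carrier.
\<close>

definition mat_on :: "nat \<Rightarrow> (nat \<Rightarrow> nat \<Rightarrow> real) \<Rightarrow> bool" where
  "mat_on n A \<longleftrightarrow> (\<forall>i j. \<not> (i < n \<and> j < n) \<longrightarrow> A i j = 0)"

definition mat_restrict :: "nat \<Rightarrow> (nat \<Rightarrow> nat \<Rightarrow> real) \<Rightarrow> nat \<Rightarrow> nat \<Rightarrow> real" where
  "mat_restrict n A = (\<lambda>i j. if i < n \<and> j < n then A i j else 0)"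

definition mmult :: "nat \<Rightarrow> (nat \<Rightarrow> nat \<Rightarrow> real) \<Rightarrow> (nat \<Rightarrow> nat \<Rightarrow> real) \<Rightarrow> nat \<Rightarrow> nat \<Rightarrow> real" where
  "mmult n A B = mat_restrict n (mat_mult n A B)"

definition mat_one :: "nat \<Rightarrow> nat \<Rightarrow> nat \<Rightarrow> real" where
  "mat_one n = (\<lambda>i j. if i < n \<and> i = j then 1 else 0)"

definition mat_transpose :: "(nat \<Rightarrow> nat \<Rightarrow> real) \<Rightarrow> nat \<Rightarrow> nat \<Rightarrow> real" where
  "mat_transpose A = (\<lambda>i j. A j i)"

definition mat_scale :: "real \<Rightarrow> (nat \<Rightarrow> nat \<Rightarrow> real) \<Rightarrow> nat \<Rightarrow> nat \<Rightarrow> real" where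
  "mat_scale c A = (\<lambda>i j. c * A i j)"

primrec mat_pow :: "nat \<Rightarrow> (nat \<Rightarrow> nat \<Rightarrow> real) \<Rightarrow> nat \<Rightarrow> nat \<Rightarrow> nat \<Rightarrow> real" where
  "mat_pow n A 0 = mat_one n"
| "mat_pow n A (Suc k) = mmult n A (mat_pow n A k)"

lemma mat_on_restrict [simp]: "mat_on n (mat_restrict n A)"
  by (simp add: mat_on_def mat_restrict_def)

lemma mat_on_mmult [simp]: "mat_on n (mmult n A B)"
  by (simp add: mmult_def)

lemma mat_on_zero [simp]: "mat_on n 0"
  by (simp add: mat_on_def)

lemma mat_on_one [simp]: "mat_on n (mat_one n)"
  by (simp add: mat_on_def mat_one_def)

lemma mat_on_pow [simp]: "mat_on n (mat_pow n A k)"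
  by (cases k) simp_all

lemma mat_on_transpose [simp]: "mat_on n (mat_transpose A) \<longleftrightarrow> mat_on n A"
  by (auto simp: mat_on_def mat_transpose_def)

lemma mat_eq_iff: "mat_on n A \<Longrightarrow> mat_on n B \<Longrightarrow> A = B \<longleftrightarrow> (\<forall>i<n. \<forall>j<n. A i j = B i j)"
  by (auto simp: mat_on_def fun_eq_iff) metis

lemma mmult_apply: "i < n \<Longrightarrow> j < n \<Longrightarrow> mmult n A B i j = (\<Sum>k<n. A i k * B k j)"
  by (simp add: mmult_def mat_restrict_def mat_mult_def)

lemma mmult_restrict_left [simp]: "mmult n (mat_restrict n A) B = mmult n A B"
  and mmult_restrict_right [simp]: "mmult n A (mat_restrict n B) = mmult n A B"
  by (auto simp: mmult_def mat_mult_def mat_restrict_def fun_eq_iff)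

lemma mmult_assoc: "mmult n (mmult n A B) C = mmult n A (mmult n B C)"
  by (auto simp: mmult_def mat_restrict_def mat_mult_def fun_eq_iff sum_distrib_left
      sum_distrib_right mult.assoc intro: sum.swap)

lemma mmult_one_left: "mat_on n A \<Longrightarrow> mmult n (mat_one n) A = A"
  by (simp add: mat_eq_iff[OF mat_on_mmult] mmult_apply mat_one_def
      if_distrib[of "\<lambda>x. x * _"] cong: if_cong)

lemma mmult_one_right: "mat_on n A \<Longrightarrow> mmult n A (mat_one n) = A"
  by (simp add: mat_eq_iff[OF mat_on_mmult] mmult_apply mat_one_def
      if_distrib[of "\<lambda>x. _ * x"] cong: if_cong)

lemma mat_transpose_mmult: "mat_transpose (mmult n A B) = mmult n (mat_transpose B) (mat_transpose A)"
  by (auto simp: mmult_def mat_restrict_def mat_mult_def mat_transpose_def fun_eq_iff mult.commute)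

lemma mat_transpose_zero [simp]: "mat_transpose 0 = 0"
  by (simp add: mat_transpose_def fun_eq_iff)

lemma mat_transpose_one [simp]: "mat_transpose (mat_one n) = mat_one n"
  by (auto simp: mat_transpose_def mat_one_def fun_eq_iff)

lemma mmult_zero_right [simp]: "mmult n A 0 = 0"
  and mmult_zero_left [simp]: "mmult n 0 A = 0"
  by (auto simp: mmult_def mat_restrict_def mat_mult_def fun_eq_iff)

lemma mmult_add_right: "mmult n A (B + C) = mmult n A B + mmult n A C"
  by (auto simp: mmult_def mat_restrict_def mat_mult_def fun_eq_iff algebra_simps sum.distrib)

lemma mmult_diff_right: "mmult n A (B - C) = mmult n A B - mmult n A C"
  by (auto simp: mmult_def mat_restrict_def mat_mult_def fun_eq_iff algebra_simps sum_subtractf)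

lemma mmult_scale_right: "mmult n A (mat_scale c B) = mat_scale c (mmult n A B)"
  by (auto simp: mmult_def mat_restrict_def mat_mult_def mat_scale_def fun_eq_iff
      algebra_simps sum_distrib_left)

lemma mmult_scale_left: "mmult n (mat_scale c A) B = mat_scale c (mmult n A B)"
  by (auto simp: mmult_def mat_restrict_def mat_mult_def mat_scale_def fun_eq_iff
      algebra_simps sum_distrib_left)

lemma mmult_add_left: "mmult n (A + B) C = mmult n A C + mmult n B C"
  by (auto simp: mmult_def mat_restrict_def mat_mult_def fun_eq_iff algebra_simps sum.distrib)

lemma mat_pow_one: "mat_on n A \<Longrightarrow> mat_pow n A 1 = A"
  by (simp add: mmult_one_right)

lemma mat_pow_add: "mat_on n A \<Longrightarrow> mmult n (mat_pow n A a) (mat_pow n A b) = mat_pow n A (a + b)"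
  by (induction a) (simp_all add: mmult_one_left mmult_assoc)

lemma mat_pow_commute:
  assumes "mat_on n A"
  shows "mmult n A (mat_pow n A k) = mmult n (mat_pow n A k) A"
proof -
  have "mmult n A (mat_pow n A k) = mmult n (mat_pow n A k) (mat_pow n A 1)"
    using mat_pow_add[OF assms, of k 1] by simp
  then show ?thesis
    by (simp only: mat_pow_one[OF assms])
qed

lemma mat_transpose_pow:
  "mat_on n A \<Longrightarrow> mat_transpose A = A \<Longrightarrow> mat_transpose (mat_pow n A k) = mat_pow n A k"
  by (induction k) (simp_all add: mat_transpose_mmult mat_pow_commute)

lemma mat_transpose_mmult_self_eq_0:
  assumes "mat_on n N" "mmult n (mat_transpose N) N = 0"
  shows "N = 0"
proof -
  have "(\<Sum>i<n. (N i j)\<^sup>2) = 0" if "j < n" for j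
    using fun_cong[OF fun_cong[OF assms(2), of j], of j] that
    by (simp add: mmult_apply mat_transpose_def power2_eq_square)
  then have "N i j = 0" if "i < n" "j < n" for i j
    using that by (simp add: sum_nonneg_eq_0_iff)
  then show ?thesis
    using assms(1) by (simp add: mat_eq_iff)
qed

lemma sym_mmult_square_eq_0:
  assumes "mat_transpose A = A" "mmult n A (mmult n A M) = 0"
  shows "mmult n A M = 0"
proof (rule mat_transpose_mmult_self_eq_0)
  show "mmult n (mat_transpose (mmult n A M)) (mmult n A M) = 0"
    by (simp add: mat_transpose_mmult assms mmult_assoc)
qed simp

lemma sym_pow_mmult_eq_0:
  assumes A: "mat_on n A" "mat_transpose A = A"
  shows "mmult n (mat_pow n A (Suc m)) M = 0 \<Longrightarrow> mmult n A M = 0"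
proof (induction m arbitrary: M)
  case 0
  then show ?case
    by (simp add: mmult_one_right[OF A(1)])
next
  case (Suc m)
  have "mmult n (mat_pow n A (Suc m)) (mmult n A M) = 0"
    using Suc.prems by (simp only: mat_pow.simps(2)[of n A "Suc m"] mat_pow_commute[OF A(1)] mmult_assoc)
  then have "mmult n A (mmult n A M) = 0"
    by (rule Suc.IH)
  then show ?case
    by (rule sym_mmult_square_eq_0[OF A(2)])
qed

section \<open>The Moore--Penrose inverse of a symmetric matrix\<close>

interpretation mat: vector_space mat_scale
  by unfold_locales (auto simp: mat_scale_def fun_eq_iff algebra_simps)

definition mat_unit :: "nat \<times> nat \<Rightarrow> nat \<Rightarrow> nat \<Rightarrow> real" where
  "mat_unit p = (\<lambda>i j. if (i, j) = p then 1 else 0)"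

lemma sum_mat_apply: "(\<Sum>k\<in>K. F k) i j = (\<Sum>k\<in>K. F k i j)"
  by (induction K rule: infinite_finite_induct) auto

lemma mat_on_in_span_units:
  assumes "mat_on n A"
  shows "A \<in> mat.span (mat_unit ` ({..<n} \<times> {..<n}))"
proof -
  have "A = (\<Sum>p\<in>{..<n} \<times> {..<n}. mat_scale (A (fst p) (snd p)) (mat_unit p))"
  proof (intro ext)
    fix i j
    have "(\<Sum>p\<in>{..<n} \<times> {..<n}. mat_scale (A (fst p) (snd p)) (mat_unit p) i j)
        = (\<Sum>p\<in>{..<n} \<times> {..<n}. if p = (i, j) then A i j else 0)"
      by (intro sum.cong) (auto simp: mat_scale_def mat_unit_def)
    also have "\<dots> = A i j"
      using assms by (auto simp: mat_on_def)
    finally show "A i j = (\<Sum>p\<in>{..<n} \<times> {..<n}. mat_scale (A (fst p) (snd p)) (mat_unit p)) i j"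
      by (simp add: sum_mat_apply)
  qed
  also have "\<dots> \<in> mat.span (mat_unit ` ({..<n} \<times> {..<n}))"
    by (intro mat.span_sum mat.span_scale mat.span_base) auto
  finally show ?thesis .
qed

lemma mat_pow_in_span_higher_pows:
  assumes "mat_on n A"
  shows "\<exists>m. mat_pow n A m \<in> mat.span (mat_pow n A ` {Suc m..})"
proof (rule ccontr)
  assume "\<not> ?thesis"
  then have new: "mat_pow n A m \<notin> mat.span (mat_pow n A ` {Suc m..})" for m
    by blast
  have "mat.independent (mat_pow n A ` {m..m + N}) \<and> inj_on (mat_pow n A) {m..m + N}" for m N
  proof (induction N arbitrary: m)
    case 0
    have "mat_pow n A m \<noteq> 0"
      using new[of m] mat.span_zero by metis
    then show ?case
      by (simp add: mat.independent_insert)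
  next
    case (Suc N)
    have "mat.span (mat_pow n A ` {Suc m..Suc m + N}) \<subseteq> mat.span (mat_pow n A ` {Suc m..})"
      by (intro mat.span_mono) auto
    then have "mat_pow n A m \<notin> mat.span (mat_pow n A ` {Suc m..Suc m + N})"
      using new[of m] by blast
    moreover from this have "mat_pow n A m \<notin> mat_pow n A ` {Suc m..Suc m + N}"
      using mat.span_base by blast
    moreover have "{m..m + Suc N} = insert m {Suc m..Suc m + N}"
      by auto
    ultimately show ?case
      using Suc.IH[of "Suc m"] by (simp only: image_insert inj_on_insert mat.independent_insert) auto
  qed
  then have ind: "mat.independent (mat_pow n A ` {0..n * n})" and inj: "inj_on (mat_pow n A) {0..n * n}"
    by (metis add_0)+
  have "mat_pow n A ` {0..n * n} \<subseteq> mat.span (mat_unit ` ({..<n} \<times> {..<n}))"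
    using mat_on_in_span_units by auto
  from mat.independent_span_bound[OF _ ind this]
  have "card (mat_pow n A ` {0..n * n}) \<le> card (mat_unit ` ({..<n} \<times> {..<n}))"
    by auto
  also have "\<dots> \<le> n * n"
    using card_image_le[of "{..<n} \<times> {..<n}" mat_unit] by simp
  finally show False
    using card_image[OF inj] by simp
qed

lemma span_pows_sym_commute:
  assumes A: "mat_on n A" "mat_transpose A = A"
    and "S \<in> mat.span (range (mat_pow n A))"
  shows "mat_on n S \<and> mat_transpose S = S \<and> mmult n A S = mmult n S A"
  using assms(3)
proof (induction rule: mat.span_induct_alt)
  case base
  show ?case
    using mat_on_zero mat_transpose_zero mmult_zero_left mmult_zero_right
    by (simp only: zero_fun_def)
next
  case (step c P S)
  then obtain k where P: "P = mat_pow n A k"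
    by blast
  have "mat_on n (mat_scale c P + S)"
    using step.IH mat_on_pow[of n A k] by (simp add: P mat_on_def mat_scale_def)
  moreover have "mat_transpose (mat_scale c P + S) = mat_scale c P + S"
    using step.IH mat_transpose_pow[OF A, of k]
    by (auto simp: P mat_transpose_def mat_scale_def fun_eq_iff)
  moreover have "mmult n A (mat_scale c P + S) = mmult n (mat_scale c P + S) A"
    using step.IH mat_pow_commute[OF A(1), of k]
    by (simp add: P mmult_add_right mmult_add_left mmult_scale_right mmult_scale_left)
  ultimately show ?case
    by blast
qed

lemma span_higher_pows_factor:
  assumes A: "mat_on n A" and "S \<in> mat.span (mat_pow n A ` {Suc m..})"
  shows "\<exists>T \<in> mat.span (range (mat_pow n A)). S = mmult n (mat_pow n A (Suc m)) T"
  using assms(2)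
proof (induction rule: mat.span_induct_alt)
  case base
  show ?case
    using mat.span_zero by force
next
  case (step c P S)
  then obtain k where k: "Suc m \<le> k" "P = mat_pow n A k"
    by blast
  from step.IH obtain T where T: "T \<in> mat.span (range (mat_pow n A))"
    and S: "S = mmult n (mat_pow n A (Suc m)) T"
    by blast
  have "P = mmult n (mat_pow n A (Suc m)) (mat_pow n A (k - Suc m))"
    using k mat_pow_add[OF A, of "Suc m" "k - Suc m"] by simp
  then have "mat_scale c P + S = mmult n (mat_pow n A (Suc m)) (mat_scale c (mat_pow n A (k - Suc m)) + T)"
    by (simp add: S mmult_add_right mmult_scale_right)
  moreover have "mat_scale c (mat_pow n A (k - Suc m)) + T \<in> mat.span (range (mat_pow n A))"
    by (rule mat.span_add[OF mat.span_scale[OF mat.span_base] T]) simp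
  ultimately show ?case
    by blast
qed

lemma sym_mat_factor_square:
  assumes A: "mat_on n A" "mat_transpose A = A"
  obtains Y where "mat_on n Y" "mat_transpose Y = Y" "mmult n A Y = mmult n Y A"
    "mmult n A (mmult n A Y) = A"
proof -
  obtain m where "mat_pow n A m \<in> mat.span (mat_pow n A ` {Suc m..})"
    using mat_pow_in_span_higher_pows[OF A(1)] by blast
  then obtain Y where Y: "Y \<in> mat.span (range (mat_pow n A))"
    and m: "mat_pow n A m = mmult n (mat_pow n A (Suc m)) Y"
    using span_higher_pows_factor[OF A(1)] by blast
  have "mmult n (mat_pow n A (Suc m)) (mmult n A Y) = mmult n A (mmult n (mat_pow n A (Suc m)) Y)"
    by (simp only: mmult_assoc[symmetric] mat_pow_commute[OF A(1), symmetric])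
  then have "mmult n (mat_pow n A (Suc m)) (mat_one n - mmult n A Y)
      = mat_pow n A (Suc m) - mmult n A (mat_pow n A m)"
    by (simp only: mmult_diff_right mmult_one_right[OF mat_on_pow] m[symmetric])
  then have "mmult n (mat_pow n A (Suc m)) (mat_one n - mmult n A Y) = 0"
    by simp
  then have "mmult n A (mat_one n - mmult n A Y) = 0"
    by (rule sym_pow_mmult_eq_0[OF A])
  then have "mmult n A (mmult n A Y) = A"
    by (simp add: mmult_diff_right mmult_one_right[OF A(1)])
  with span_pows_sym_commute[OF A Y] show ?thesis
    using that by blast
qed

definition is_pinv :: "nat \<Rightarrow> (nat \<Rightarrow> nat \<Rightarrow> real) \<Rightarrow> (nat \<Rightarrow> nat \<Rightarrow> real) \<Rightarrow> bool" where
  "is_pinv n A X \<longleftrightarrow> mat_on n X \<and> mmult n (mmult n A X) A = A \<and> mmult n (mmult n X A) X = X \<and>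
     mat_transpose (mmult n A X) = mmult n A X \<and> mat_transpose (mmult n X A) = mmult n X A"

lemma mmult_mmult_apply:
  "i < n \<Longrightarrow> j < n \<Longrightarrow> mmult n (mmult n A B) C i j = mat_mult n (mat_mult n A B) C i j"
  by (simp add: mmult_apply mat_mult_def)

lemma is_MP_inverse_iff_is_pinv: "is_MP_inverse n A X \<longleftrightarrow> is_pinv n (mat_restrict n A) X"
proof (cases "mat_on n X")
  case True
  have "mmult n (mmult n A X) A = mat_restrict n A \<longleftrightarrow>
      (\<forall>i<n. \<forall>j<n. mat_mult n (mat_mult n A X) A i j = A i j)"
    by (subst mat_eq_iff[OF mat_on_mmult mat_on_restrict]) (auto simp: mmult_mmult_apply mat_restrict_def)
  moreover have "mmult n (mmult n X A) X = X \<longleftrightarrow>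
      (\<forall>i<n. \<forall>j<n. mat_mult n (mat_mult n X A) X i j = X i j)"
    by (simp add: mat_eq_iff[OF mat_on_mmult True] mmult_mmult_apply)
  moreover have "mat_transpose (mmult n A X) = mmult n A X \<longleftrightarrow>
      (\<forall>i<n. \<forall>j<n. mat_mult n A X i j = mat_mult n A X j i)"
    by (subst mat_eq_iff[OF mat_on_transpose[THEN iffD2, OF mat_on_mmult] mat_on_mmult])
      (auto simp: mmult_apply mat_transpose_def mat_mult_def)
  moreover have "mat_transpose (mmult n X A) = mmult n X A \<longleftrightarrow>
      (\<forall>i<n. \<forall>j<n. mat_mult n X A i j = mat_mult n X A j i)"
    by (subst mat_eq_iff[OF mat_on_transpose[THEN iffD2, OF mat_on_mmult] mat_on_mmult])
      (auto simp: mmult_apply mat_transpose_def mat_mult_def)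
  ultimately show ?thesis
    using True unfolding is_pinv_def is_MP_inverse_def mmult_restrict_left mmult_restrict_right
    by (auto simp: mat_on_def)
next
  case False
  then show ?thesis
    unfolding is_MP_inverse_def is_pinv_def mat_on_def by blast
qed

lemma is_pinv_unique:
  assumes X: "is_pinv n A X" and Z: "is_pinv n A Z"
  shows "X = Z"
proof -
  have X1: "mmult n (mmult n A X) A = A" "mmult n (mmult n X A) X = X"
    "mat_transpose (mmult n A X) = mmult n A X" "mat_transpose (mmult n X A) = mmult n X A"
    using X by (auto simp: is_pinv_def)
  have Z1: "mmult n (mmult n A Z) A = A" "mmult n (mmult n Z A) Z = Z"
    "mat_transpose (mmult n A Z) = mmult n A Z" "mat_transpose (mmult n Z A) = mmult n Z A"
    using Z by (auto simp: is_pinv_def)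
  have AZ: "mat_transpose A = mmult n (mat_transpose A) (mmult n A Z)"
    by (metis Z1(1,3) mat_transpose_mmult)
  have XA: "mat_transpose A = mmult n (mmult n X A) (mat_transpose A)"
    by (metis X1(1,4) mat_transpose_mmult mmult_assoc)
  have "X = mmult n X (mat_transpose (mmult n A X))"
    using X1(2,3) by (simp add: mmult_assoc)
  also have "\<dots> = mmult n X (mmult n (mat_transpose X) (mat_transpose A))"
    by (simp only: mat_transpose_mmult)
  also have "\<dots> = mmult n X (mmult n (mmult n (mat_transpose X) (mat_transpose A)) (mmult n A Z))"
    by (subst AZ) (simp only: mmult_assoc)
  also have "\<dots> = mmult n X (mmult n (mmult n A X) (mmult n A Z))"
    by (simp only: mat_transpose_mmult[symmetric] X1(3))
  also have "\<dots> = mmult n X (mmult n A Z)"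
    by (simp only: mmult_assoc[symmetric] X1(2))
  finally have X_eq: "X = mmult n X (mmult n A Z)" .
  have "Z = mmult n (mat_transpose (mmult n Z A)) Z"
    using Z1(2,4) by simp
  also have "\<dots> = mmult n (mmult n (mat_transpose A) (mat_transpose Z)) Z"
    by (simp only: mat_transpose_mmult)
  also have "\<dots> = mmult n (mmult n (mmult n X A) (mmult n (mat_transpose A) (mat_transpose Z))) Z"
    by (subst XA) (simp only: mmult_assoc)
  also have "\<dots> = mmult n (mmult n (mmult n X A) (mmult n Z A)) Z"
    by (simp only: mat_transpose_mmult[symmetric] Z1(4))
  also have "\<dots> = mmult n X (mmult n A Z)"
    by (simp only: mmult_assoc Z1(2)[unfolded mmult_assoc])
  finally show ?thesis
    using X_eq by simp
qed

lemma sym_mat_pinv_exists: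
  assumes A: "mat_on n A" "mat_transpose A = A"
  obtains X where "is_pinv n A X" "mat_transpose X = X"
proof -
  obtain Y where Y: "mat_on n Y" "mat_transpose Y = Y" and comm: "mmult n A Y = mmult n Y A"
    and sq: "mmult n A (mmult n A Y) = A"
    using sym_mat_factor_square[OF A] by blast
  have comm': "mmult n A (mmult n Y Z) = mmult n Y (mmult n A Z)" for Z
    by (simp only: mmult_assoc[symmetric] comm)
  have sq': "mmult n Y (mmult n A A) = A"
    using sq by (simp only: mmult_assoc[symmetric] comm)
  have sq'': "mmult n Y (mmult n A (mmult n A Z)) = mmult n A Z" for Z
    using sq' by (simp only: mmult_assoc[symmetric])
  \<comment> \<open>\<open>Y A Y\<close> is the group inverse of \<open>A\<close>; by symmetry of \<open>A\<close> and \<open>Y\<close> it satisfies all Penrose equations.\<close>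
  define X where "X = mmult n Y (mmult n A Y)"
  note normalize = mmult_assoc comm comm' sq' sq''
  have "is_pinv n A X"
    unfolding is_pinv_def X_def
    by (simp only: normalize mat_on_mmult mat_transpose_mmult A(2) Y(2) simp_thms)
  moreover have "mat_transpose X = X"
    unfolding X_def by (simp only: mat_transpose_mmult A(2) Y(2) normalize)
  ultimately show ?thesis
    using that by blast
qed

lemma MP_pinv_symmetric:
  assumes sym: "\<And>i j. A i j = A j i"
  shows "mat_on n (MP_pinv n A)" "mat_transpose (MP_pinv n A) = MP_pinv n A"
    "mmult n (MP_pinv n A) (mmult n A (MP_pinv n A)) = MP_pinv n A"
proof -
  have "mat_transpose (mat_restrict n A) = mat_restrict n A"
    using sym by (simp add: mat_transpose_def mat_restrict_def fun_eq_iff)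
  then have A: "mat_on n (mat_restrict n A)" "mat_transpose (mat_restrict n A) = mat_restrict n A"
    by simp_all
  obtain X where X: "is_pinv n (mat_restrict n A) X" "mat_transpose X = X"
    using sym_mat_pinv_exists[OF A] by blast
  have "MP_pinv n A = X"
    unfolding MP_pinv_def is_MP_inverse_iff_is_pinv
    using X(1) is_pinv_unique by blast
  moreover have "mmult n X (mmult n A X) = X"
    using X(1) unfolding is_pinv_def by (metis mmult_assoc mmult_restrict_right)
  ultimately show "mat_on n (MP_pinv n A)" "mat_transpose (MP_pinv n A) = MP_pinv n A"
    "mmult n (MP_pinv n A) (mmult n A (MP_pinv n A)) = MP_pinv n A"
    using X by (simp_all add: is_pinv_def)
qed

lemma sum_mat_vec_assoc:
  fixes v :: "'m \<Rightarrow> 'a::comm_semiring_0"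
  shows "(\<Sum>j\<in>J. P j * (\<Sum>m\<in>M. Q j m * v m)) = (\<Sum>m\<in>M. (\<Sum>j\<in>J. P j * Q j m) * v m)"
  unfolding sum_distrib_left sum_distrib_right mult.assoc by (rule sum.swap)

lemma MP_pinv_quadratic_form:
  fixes n :: nat and A :: "nat \<Rightarrow> nat \<Rightarrow> real" and v :: "nat \<Rightarrow> real"
  assumes sym: "\<And>i j. A i j = A j i"
  defines "b \<equiv> \<lambda>i. \<Sum>j<n. MP_pinv n A i j * v j"
  shows "(\<Sum>i<n. b i * (\<Sum>j<n. A i j * b j)) = (\<Sum>i<n. b i * v i)"
proof -
  define X where "X = MP_pinv n A"
  note pinv = MP_pinv_symmetric[where A = A and n = n, OF sym, folded X_def]
  have X_sym: "X i j = X j i" for i j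
    using fun_cong[OF fun_cong[OF pinv(2), where x=j], where x=i] by (simp add: mat_transpose_def)
  have XAX: "(\<Sum>j<n. (\<Sum>i<n. X k i * A i j) * X j m) = X k m" if "k < n" "m < n" for k m
  proof -
    have "mmult n (mmult n X A) X k m = X k m"
      using pinv(3) by (simp add: mmult_assoc)
    then show ?thesis
      using that by (simp add: mmult_mmult_apply mat_mult_def)
  qed
  have b: "b i = (\<Sum>k<n. X i k * v k)" for i
    by (simp add: b_def X_def)
  have "b i = (\<Sum>k<n. v k * X k i)" for i
    unfolding b by (intro sum.cong refl) (simp only: X_sym[of i] mult.commute)
  then have b_row: "(\<Sum>i<n. b i * w i) = (\<Sum>k<n. v k * (\<Sum>i<n. X k i * w i))" for w
    by (simp only: sum_mat_vec_assoc[symmetric])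
  have XAb: "(\<Sum>i<n. X k i * (\<Sum>j<n. A i j * b j)) = b k" if "k < n" for k
    using that by (simp add: b sum_mat_vec_assoc XAX)
  have "(\<Sum>i<n. b i * (\<Sum>j<n. A i j * b j)) = (\<Sum>k<n. v k * b k)"
    by (simp add: b_row XAb)
  also have "\<dots> = (\<Sum>i<n. b i * v i)"
    by (simp add: mult.commute)
  finally show ?thesis .
qed

section \<open>Square-integrable functions\<close>

lemma integrable_L2_mult:
  assumes "L2_on D u" "L2_on D v"
  shows "integrable (lebesgue_on D) (\<lambda>x. u x * v x)"
proof (rule Bochner_Integration.integrable_bound[where f = "\<lambda>x. (u x)\<^sup>2 + (v x)\<^sup>2"])
  show "integrable (lebesgue_on D) (\<lambda>x. (u x)\<^sup>2 + (v x)\<^sup>2)"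
    using assms by (auto simp: L2_on_def)
  show "(\<lambda>x. u x * v x) \<in> borel_measurable (lebesgue_on D)"
    using assms by (auto simp: L2_on_def)
  have "\<bar>u x * v x\<bar> \<le> (u x)\<^sup>2 + (v x)\<^sup>2" for x
  proof -
    have "2 * (\<bar>u x\<bar> * \<bar>v x\<bar>) \<le> (u x)\<^sup>2 + (v x)\<^sup>2"
      using sum_squares_bound[of "\<bar>u x\<bar>" "\<bar>v x\<bar>"] by (simp add: mult.assoc)
    moreover have "0 \<le> \<bar>u x\<bar> * \<bar>v x\<bar>"
      by simp
    ultimately show ?thesis
      unfolding abs_mult by linarith
  qed
  then show "AE x in lebesgue_on D. norm (u x * v x) \<le> norm ((u x)\<^sup>2 + (v x)\<^sup>2)"
    by simp
qed

lemma L2_on_add: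
  assumes "L2_on D u" "L2_on D v"
  shows "L2_on D (\<lambda>x. u x + v x)"
proof -
  have "integrable (lebesgue_on D) (\<lambda>x. (u x)\<^sup>2 + 2 * (u x * v x) + (v x)\<^sup>2)"
    using assms integrable_L2_mult[OF assms] by (auto simp: L2_on_def)
  then show ?thesis
    using assms by (auto simp: L2_on_def power2_sum ac_simps)
qed

lemma L2_on_scale: "L2_on D u \<Longrightarrow> L2_on D (\<lambda>x. a * u x)"
  by (auto simp: L2_on_def power_mult_distrib)

lemma L2_on_diff: "L2_on D u \<Longrightarrow> L2_on D v \<Longrightarrow> L2_on D (\<lambda>x. u x - v x)"
  using L2_on_add[of D u "\<lambda>x. -1 * v x"] L2_on_scale[of D v "-1"] by simp

lemma L2_on_sum: "(\<And>k. k \<in> K \<Longrightarrow> L2_on D (F k)) \<Longrightarrow> L2_on D (\<lambda>x. \<Sum>k\<in>K. F k x)"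
  by (induction K rule: infinite_finite_induct) (auto simp: L2_on_add, simp_all add: L2_on_def)

lemma L2_on_bounded:
  assumes "compact D" "h \<in> borel_measurable lebesgue" "bounded (range h)"
  shows "L2_on D h"
proof -
  interpret finite_measure "lebesgue_on D"
    using assms(1) by (intro finite_measure_lebesgue_on lmeasurable_compact)
  obtain B where B: "\<And>x. \<bar>h x\<bar> \<le> B"
    using assms(3) unfolding bounded_iff by auto
  have h: "h \<in> borel_measurable (lebesgue_on D)"
    using assms(2) by (rule measurable_restrict_space1)
  have "integrable (lebesgue_on D) (\<lambda>x. (h x)\<^sup>2)"
  proof (rule integrable_const_bound[where B = "B\<^sup>2"])
    show "AE x in lebesgue_on D. norm ((h x)\<^sup>2) \<le> B\<^sup>2"
      using B by (intro AE_I2) (metis abs_ge_zero norm_power power_mono real_norm_def)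
    show "(\<lambda>x. (h x)\<^sup>2) \<in> borel_measurable (lebesgue_on D)"
      using h by measurable
  qed
  then show ?thesis
    using h by (simp add: L2_on_def)
qed

lemma l2_inner_commute: "l2_inner D u v = l2_inner D v u"
  by (simp add: l2_inner_def mult.commute)

lemma l2_inner_scale_left: "l2_inner D (\<lambda>x. a * u x) w = a * l2_inner D u w"
  by (simp add: l2_inner_def mult.assoc)

lemma l2_inner_diff_left:
  assumes "L2_on D u" "L2_on D v" "L2_on D w"
  shows "l2_inner D (\<lambda>x. u x - v x) w = l2_inner D u w - l2_inner D v w"
  using integrable_L2_mult[OF assms(1,3)] integrable_L2_mult[OF assms(2,3)]
  by (simp add: l2_inner_def left_diff_distrib)

lemma l2_inner_sum_left:
  assumes "\<And>k. k \<in> K \<Longrightarrow> L2_on D (F k)" "L2_on D w"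
  shows "l2_inner D (\<lambda>x. \<Sum>k\<in>K. F k x) w = (\<Sum>k\<in>K. l2_inner D (F k) w)"
  unfolding l2_inner_def sum_distrib_right
  using assms by (intro Bochner_Integration.integral_sum integrable_L2_mult)

lemma l2_norm_power2: "(l2_norm D u)\<^sup>2 = l2_inner D u u"
  by (simp add: l2_norm_def l2_inner_def)

lemma l2_inner_diff_self:
  assumes "L2_on D u" "L2_on D v"
  shows "l2_inner D (\<lambda>x. u x - v x) (\<lambda>x. u x - v x)
    = l2_inner D u u - 2 * l2_inner D u v + l2_inner D v v"
  using l2_inner_diff_left[OF assms L2_on_diff[OF assms]] l2_inner_diff_left[OF assms assms(1)]
    l2_inner_diff_left[OF assms assms(2)] l2_inner_commute[of D u "\<lambda>x. u x - v x"]
    l2_inner_commute[of D v "\<lambda>x. u x - v x"] l2_inner_commute[of D v u]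
  by linarith

lemma l2_inner_self_nonneg: "0 \<le> l2_inner D u u"
  by (simp add: l2_inner_def)

lemma vl2_norm_power2: "(vl2_norm D F)\<^sup>2 = (\<Sum>c\<in>UNIV. l2_inner D (\<lambda>x. F x $ c) (\<lambda>x. F x $ c))"
  by (simp add: vl2_norm_def l2_norm_power2 sum_nonneg l2_inner_self_nonneg)

section \<open>Decay of the least-squares residual\<close>

lemma batch_out_L2:
  assumes "\<And>i. i < l \<Longrightarrow> L2_on D (g (L - l + 1 + i))"
  shows "L2_on D (batch_out D g l L e)"
  unfolding batch_out_def using assms by (intro L2_on_sum L2_on_scale) simp

lemma batch_out_inner_self:
  assumes e: "L2_on D e" and G: "\<And>i. i < l \<Longrightarrow> L2_on D (g (L - l + 1 + i))"
  shows "l2_inner D (batch_out D g l L e) (batch_out D g l L e) = l2_inner D e (batch_out D g l L e)"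
proof -
  define h where "h = batch_out D g l L e"
  define b where "b = batch_beta D g l L e"
  have h_inner: "l2_inner D h w = (\<Sum>i<l. b i * l2_inner D (g (L - l + 1 + i)) w)" if "L2_on D w" for w
    unfolding h_def batch_out_def b_def using G that
    by (subst l2_inner_sum_left) (auto intro: L2_on_scale simp: l2_inner_scale_left)
  have G_h: "l2_inner D (g (L - l + 1 + i)) h = (\<Sum>j<l. batch_gram D g l L i j * b j)" if "i < l" for i
  proof -
    have "l2_inner D (g (L - l + 1 + i)) h = l2_inner D h (g (L - l + 1 + i))"
      by (rule l2_inner_commute)
    also have "\<dots> = (\<Sum>j<l. b j * l2_inner D (g (L - l + 1 + j)) (g (L - l + 1 + i)))"
      using G[OF that] by (rule h_inner)
    also have "\<dots> = (\<Sum>j<l. batch_gram D g l L i j * b j)"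
      by (intro sum.cong refl) (metis batch_gram_def l2_inner_commute mult.commute)
    finally show ?thesis .
  qed
  have "L2_on D h"
    unfolding h_def using G by (rule batch_out_L2)
  then have "l2_inner D h h = (\<Sum>i<l. b i * l2_inner D (g (L - l + 1 + i)) h)"
    by (rule h_inner)
  also have "\<dots> = (\<Sum>i<l. b i * (\<Sum>j<l. batch_gram D g l L i j * b j))"
    by (intro sum.cong refl) (simp only: lessThan_iff G_h)
  also have "\<dots> = (\<Sum>i<l. b i * l2_inner D (g (L - l + 1 + i)) e)"
    unfolding b_def batch_beta_def
    by (rule MP_pinv_quadratic_form) (simp add: batch_gram_def l2_inner_commute)
  also have "\<dots> = l2_inner D e h"
    using h_inner[OF e] by (simp add: l2_inner_commute[of D e])
  finally show ?thesis
    unfolding h_def .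
qed

lemma net_out_component: "net_out g \<beta> L x $ c = (\<Sum>j\<in>{1..L}. \<beta> j $ c * g j x)"
  by (simp add: net_out_def mult.commute)

lemma net_out_residual_L2:
  assumes "L2_on D (\<lambda>x. f x $ c)" "\<And>j. j \<ge> 1 \<Longrightarrow> L2_on D (g j)"
  shows "L2_on D (\<lambda>x. (f x - net_out g \<beta> L x) $ c)"
  unfolding vector_minus_component net_out_component
  using assms by (intro L2_on_diff L2_on_sum L2_on_scale) auto

lemma sum_atLeastAtMost_append:
  fixes F :: "nat \<Rightarrow> 'a::comm_monoid_add"
  shows "(\<Sum>j\<in>{1..L + l}. F j) = (\<Sum>j\<in>{1..L}. F j) + (\<Sum>i<l. F (L + 1 + i))"
proof -
  have "{L + 1..L + l} = (\<lambda>i. L + 1 + i) ` {..<l}"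
  proof (intro set_eqI iffI)
    fix j
    assume "j \<in> {L + 1..L + l}"
    then show "j \<in> (\<lambda>i. L + 1 + i) ` {..<l}"
      by (intro image_eqI[of _ _ "j - (L + 1)"]) auto
  qed auto
  then show ?thesis
    using sum.ub_add_nat[of 1 L F l] by (simp add: sum.reindex inj_on_def)
qed

lemma net_out_append_batch:
  "net_out g (\<lambda>j. if j \<le> L then \<beta> j else \<gamma> (j - L - 1)) (L + l) x
     = net_out g \<beta> L x + (\<Sum>i<l. g (L + 1 + i) x *\<^sub>R \<gamma> i)"
  unfolding net_out_def sum_atLeastAtMost_append by simp

lemma LS_residual_contraction:
  fixes f :: "'m::euclidean_space \<Rightarrow> real^'c" and g :: "nat \<Rightarrow> 'm \<Rightarrow> real"
    and \<alpha> :: "nat \<Rightarrow> real^'c" and L :: nat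
  defines "e \<equiv> \<lambda>c x. (f x - net_out g \<alpha> L x) $ c"
  assumes f_L2: "\<And>c. L2_on D (\<lambda>x. f x $ c)"
    and g_L2: "\<And>j. j \<ge> 1 \<Longrightarrow> L2_on D (g j)"
    and LS: "is_LS_weights D f g (L + l) \<beta>"
    and batch: "\<And>c. l2_inner D (e c) (batch_out D g l (L + l) (e c)) \<ge> (1 - \<rho>) * (l2_norm D (e c))\<^sup>2"
  shows "(vl2_norm D (\<lambda>x. f x - net_out g \<beta> (L + l) x))\<^sup>2
    \<le> \<rho> * (vl2_norm D (\<lambda>x. f x - net_out g \<alpha> L x))\<^sup>2"
proof -
  \<comment> \<open>Competing weights: keep \<open>\<alpha>\<close> and fit the new batch to each component of the old residual.\<close>
  define h where "h c = batch_out D g l (L + l) (e c)" for c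
  define \<gamma> where "\<gamma> i = (\<chi> c. batch_beta D g l (L + l) (e c) i)" for i
  define \<beta>' where "\<beta>' = (\<lambda>j. if j \<le> L then \<alpha> j else \<gamma> (j - L - 1))"
  have e_L2: "L2_on D (e c)" for c
    unfolding e_def using f_L2 g_L2 by (rule net_out_residual_L2)
  have G_L2: "L2_on D (g (L + l - l + 1 + i))" for i
    by (intro g_L2) simp
  have h_L2: "L2_on D (h c)" for c
    unfolding h_def using G_L2 by (rule batch_out_L2)
  have residual': "(f x - net_out g \<beta>' (L + l) x) $ c = e c x - h c x" for x c
  proof -
    have "net_out g \<beta>' (L + l) x = net_out g \<alpha> L x + (\<Sum>i<l. g (L + 1 + i) x *\<^sub>R \<gamma> i)"
      unfolding \<beta>'_def by (rule net_out_append_batch)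
    then show ?thesis
      by (simp add: e_def h_def batch_out_def \<gamma>_def mult.commute)
  qed
  have "vl2_norm D (\<lambda>x. f x - net_out g \<beta> (L + l) x) \<le> vl2_norm D (\<lambda>x. f x - net_out g \<beta>' (L + l) x)"
    using LS by (simp add: is_LS_weights_def)
  then have "(vl2_norm D (\<lambda>x. f x - net_out g \<beta> (L + l) x))\<^sup>2
      \<le> (vl2_norm D (\<lambda>x. f x - net_out g \<beta>' (L + l) x))\<^sup>2"
    by (rule power_mono) (simp add: vl2_norm_def sum_nonneg)
  also have "\<dots> = (\<Sum>c\<in>UNIV. l2_inner D (\<lambda>x. e c x - h c x) (\<lambda>x. e c x - h c x))"
    by (simp only: vl2_norm_power2 residual')
  also have "\<dots> = (\<Sum>c\<in>UNIV. l2_inner D (e c) (e c) - l2_inner D (e c) (h c))"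
  proof (intro sum.cong refl)
    fix c
    have "l2_inner D (h c) (h c) = l2_inner D (e c) (h c)"
      unfolding h_def using e_L2 G_L2 by (rule batch_out_inner_self)
    then show "l2_inner D (\<lambda>x. e c x - h c x) (\<lambda>x. e c x - h c x)
        = l2_inner D (e c) (e c) - l2_inner D (e c) (h c)"
      using l2_inner_diff_self[OF e_L2 h_L2] by simp
  qed
  also have "\<dots> \<le> (\<Sum>c\<in>UNIV. \<rho> * l2_inner D (e c) (e c))"
    using batch by (intro sum_mono) (simp add: h_def l2_norm_power2 algebra_simps)
  also have "\<dots> = \<rho> * (vl2_norm D (\<lambda>x. f x - net_out g \<alpha> L x))\<^sup>2"
    by (simp add: vl2_norm_power2 sum_distrib_left e_def)
  finally show ?thesis .
qed

lemma contraction_LIMSEQ_zero: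
  fixes E a :: "nat \<Rightarrow> real"
  assumes E_nonneg: "\<And>k. 0 \<le> E k" and step: "\<And>k. E (Suc k) \<le> a k * E k"
    and lim: "a \<longlonglongrightarrow> \<rho>" and "\<rho> < 1"
  shows "E \<longlonglongrightarrow> 0"
proof -
  obtain N where N: "\<And>k. k \<ge> N \<Longrightarrow> a k < (1 + \<rho>) / 2"
    using order_tendstoD(2)[OF lim, of "(1 + \<rho>) / 2"] \<open>\<rho> < 1\<close>
    unfolding eventually_sequentially by auto
  have "norm (E (Suc k)) \<le> (1 + \<rho>) / 2 * norm (E k)" if "k \<ge> N" for k
    using step[of k] mult_right_mono[OF less_imp_le[OF N[OF that]] E_nonneg[of k]] E_nonneg
    by simp
  then have "summable E"
    using \<open>\<rho> < 1\<close> by (intro summable_ratio_test[of "(1 + \<rho>) / 2" N]) auto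
  then show ?thesis
    by (rule summable_LIMSEQ_zero)
qed

theorem theorem2:
  fixes D :: "(real^'m) set"
    and f :: "real^'m \<Rightarrow> real^'c"
    and \<Gamma> :: "(real^'m \<Rightarrow> real) set"
    and r :: real and \<mu> :: "nat \<Rightarrow> real" and l :: nat
    and g :: "nat \<Rightarrow> real^'m \<Rightarrow> real"
    and \<beta>s :: "nat \<Rightarrow> nat \<Rightarrow> real^'c"
  assumes D_compact: "compact D"
    and f_L2: "\<forall>c. L2_on D (\<lambda>x. f x $ c)"
    and Gamma_nodes: "\<forall>h\<in>\<Gamma>. admissible_node h"
    and dense: "span_dense_L2 D \<Gamma>"
    and r: "0 < r" "r < 1"
    and mu_nonneg: "\<forall>L\<ge>1. 0 \<le> \<mu> L"
    and mu_lim: "\<mu> \<longlonglongrightarrow> 0"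
    and mu_le: "\<forall>L\<ge>1. \<mu> L \<le> 1 - r"
    and l_pos: "l \<ge> 1"
    and g_in: "\<forall>j\<ge>1. g j \<in> \<Gamma>"
    and LS: "\<forall>k. is_LS_weights D f g (k * l) (\<beta>s (k * l))"
    and ineq: "\<forall>k\<ge>1. \<forall>c.
        let L = k * l;
            e = (\<lambda>x. (f x - net_out g (\<beta>s (L - l)) (L - l) x) $ c)
        in l2_inner D e (batch_out D g l L e) \<ge> (1 - r - \<mu> L) * (l2_norm D e)^2"
  shows "(\<lambda>k. vl2_norm D (\<lambda>x. f x - net_out g (\<beta>s (k * l)) (k * l) x)) \<longlonglongrightarrow> 0"
proof -
  have g_L2: "L2_on D (g j)" if "j \<ge> 1" for j
    using Gamma_nodes g_in that D_compact by (auto simp: admissible_node_def intro: L2_on_bounded)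
  define E where "E k = (vl2_norm D (\<lambda>x. f x - net_out g (\<beta>s (k * l)) (k * l) x))\<^sup>2" for k
  have contraction: "E (Suc k) \<le> (r + \<mu> (k * l + l)) * E k" for k
  proof -
    have L: "Suc k * l = k * l + l"
      by simp
    show ?thesis
      unfolding E_def L
      apply (rule LS_residual_contraction[OF f_L2[rule_format]])
      subgoal by (rule g_L2)
      subgoal using LS L by metis
      subgoal for c using ineq[rule_format, of "Suc k" c] by (simp add: Let_def diff_diff_eq add.commute)
      done
  qed
  have "(\<lambda>k. \<mu> (k * l + l)) \<longlonglongrightarrow> 0"
    using LIMSEQ_subseq_LIMSEQ[OF mu_lim, of "\<lambda>k. k * l + l"] l_pos
    by (simp add: strict_mono_def comp_def)
  then have "(\<lambda>k. r + \<mu> (k * l + l)) \<longlonglongrightarrow> r"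
    using tendsto_add[OF tendsto_const] by fastforce
  with contraction have "E \<longlonglongrightarrow> 0"
    using r by (intro contraction_LIMSEQ_zero[of E]) (auto simp: E_def)
  then have "(\<lambda>k. sqrt (E k)) \<longlonglongrightarrow> sqrt 0"
    by (rule tendsto_real_sqrt)
  then show ?thesis
    by (simp add: E_def vl2_norm_def sum_nonneg)
qed

end
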